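(* Let $X$ be a locally connected compact metrizable group with an invariant metric $\delta$, let $T$ be a minimal rotation of $X$, let $G$ be a locally compact second countable group, $f\colon X\to G$ continuous, $H$ a closed subgroup of $G$, and let $y\mapsto H_y$ be a consistent selection of subgroups in the essential ranges of $f$. Let $U$ be a relatively compact open neighbourhood of $\mathbf 1_G$ such that $E_z(f)\cap(\bar U H_z\setminus UH_z)=\varnothing$ for some $z\in X$. Then there exists $\varepsilon>0$ such that for all $y\in X$ and $n\in\mathbb Z$ with $\delta(y,z)<\varepsilon$ and $\delta(T^ny,z)<\varepsilon$, either $f(n,y)H_y\cap UH_y\neq\varnothing$ or $f(n,y)H_y\cap\bar UH_y=\varnothing$. Furthermore, for every $y\in X$ and every $g\in E_y(f)$ we have $gH_y\subseteq E_y(f)$.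
   Context: The cocycle is $f(n,x)=f(T^{n-1}x)\cdots f(x)$ for $n\ge1$, $f(0,x)=\mathbf 1_G$, $f(n,x)=f(-n,T^nx)^{-1}$ for $n<0$. $E_x(f)$ is the set of $g\in G$ such that for every open neighbourhood $U$ of $g$ and every open neighbourhood $\mathcal O$ of $x$ there is $n\neq0$ with $T^{-n}\mathcal O\cap\mathcal O\cap\{y:f(n,y)\in U\}\neq\varnothing$. $H^G=\{gHg^{-1}:g\in G\}$, topologised via the bijection with $G/N(H)$, $N(H)=\{g:gHg^{-1}=H\}$. A consistent selection of subgroups in the essential ranges of $f$ is a continuous map $y\mapsto H_y$ from $X$ into $H^G$ such that $H_x\subseteq E_x(f)$ and $H_{T^nx}=f(n,x)H_xf(n,x)^{-1}$ for all $x\in X$, $n\in\mathbb Z$. *)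

theory Defs
  imports "HOL-Analysis.Analysis" "HOL-Algebra.Coset"
begin

definition topological_group :: "('a::topological_space) monoid \<Rightarrow> bool" where
  "topological_group M \<longleftrightarrow> group M \<and> carrier M = UNIV \<and>
     continuous_on UNIV (\<lambda>p::'a \<times> 'a. fst p \<otimes>\<^bsub>M\<^esub> snd p) \<and>
     continuous_on UNIV (\<lambda>x. m_inv M x)"

definition Tpow :: "('x \<Rightarrow> 'x) \<Rightarrow> int \<Rightarrow> 'x \<Rightarrow> 'x" where
  "Tpow T n = (if 0 \<le> n then T ^^ nat n else (the_inv T) ^^ nat (- n))"

fun cocycle_nat :: "'g monoid \<Rightarrow> ('x \<Rightarrow> 'x) \<Rightarrow> ('x \<Rightarrow> 'g) \<Rightarrow> nat \<Rightarrow> 'x \<Rightarrow> 'g" where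
  "cocycle_nat G T f 0 x = \<one>\<^bsub>G\<^esub>"
| "cocycle_nat G T f (Suc n) x = f ((T ^^ n) x) \<otimes>\<^bsub>G\<^esub> cocycle_nat G T f n x"

definition cocycle :: "'g monoid \<Rightarrow> ('x \<Rightarrow> 'x) \<Rightarrow> ('x \<Rightarrow> 'g) \<Rightarrow> int \<Rightarrow> 'x \<Rightarrow> 'g" where
  "cocycle G T f n x = (if 0 \<le> n then cocycle_nat G T f (nat n) x
      else m_inv G (cocycle_nat G T f (nat (- n)) (Tpow T n x)))"

definition ess_range :: "'g::topological_space monoid \<Rightarrow> ('x::topological_space \<Rightarrow> 'x) \<Rightarrow> ('x \<Rightarrow> 'g) \<Rightarrow> 'x \<Rightarrow> 'g set" where
  "ess_range G T f x = {g. \<forall>U W. open U \<longrightarrow> g \<in> U \<longrightarrow> open W \<longrightarrow> x \<in> W \<longrightarrow>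
      (\<exists>n::int. n \<noteq> 0 \<and> (\<exists>y. y \<in> W \<and> Tpow T n y \<in> W \<and> cocycle G T f n y \<in> U))}"

definition conj_sub :: "'g monoid \<Rightarrow> 'g \<Rightarrow> 'g set \<Rightarrow> 'g set" where
  "conj_sub G g H = (g <#\<^bsub>G\<^esub> H) #>\<^bsub>G\<^esub> m_inv G g"

definition conjugates :: "'g monoid \<Rightarrow> 'g set \<Rightarrow> 'g set set" where
  "conjugates G H = {conj_sub G g H | g. g \<in> carrier G}"

text \<open>Continuity of a map into H^G, where H^G carries the quotient topology of
  g \<mapsto> gHg^{-1} (equivalently the topology transported from G/N(H)):
  preimages of sets whose preimage in G is open are open.\<close>
definition continuous_into_conjugates ::
    "'g::topological_space monoid \<Rightarrow> 'g set \<Rightarrow> ('x::topological_space \<Rightarrow> 'g set) \<Rightarrow> bool" where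
  "continuous_into_conjugates G H S \<longleftrightarrow> (\<forall>y. S y \<in> conjugates G H) \<and>
     (\<forall>V. open {g. conj_sub G g H \<in> V} \<longrightarrow> open {y. S y \<in> V})"

definition consistent_selection ::
    "'g::topological_space monoid \<Rightarrow> ('x::topological_space \<Rightarrow> 'x) \<Rightarrow> ('x \<Rightarrow> 'g) \<Rightarrow> 'g set \<Rightarrow> ('x \<Rightarrow> 'g set) \<Rightarrow> bool" where
  "consistent_selection G T f H S \<longleftrightarrow> continuous_into_conjugates G H S \<and>
     (\<forall>x. S x \<subseteq> ess_range G T f x) \<and>
     (\<forall>x n. S (Tpow T n x) = conj_sub G (cocycle G T f n x) (S x))"

definition minimal_rotation :: "('x::topological_space) monoid \<Rightarrow> ('x \<Rightarrow> 'x) \<Rightarrow> bool" where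
  "minimal_rotation X T \<longleftrightarrow> (\<exists>a \<in> carrier X. T = (\<lambda>x. a \<otimes>\<^bsub>X\<^esub> x)) \<and>
     (\<forall>y. closure (range (\<lambda>n::int. Tpow T n y)) = UNIV)"

end

theory Submission
  imports Defs
begin

text \<open>
  The basic tool is an approximation principle: if \<open>u \<noteq> \<one>\<close> and every neighbourhood of \<open>u\<close>
  contains some \<open>f(n,y) h\<close> with \<open>h \<in> E\<^sub>y(f)\<close> and both \<open>y\<close> and \<open>T\<^sup>n y\<close> arbitrarily close to
  \<open>z\<close>, then \<open>u \<in> E\<^sub>z(f)\<close>. Indeed, \<open>h\<close> is approximated by return values \<open>f(m,w)\<close> with \<open>w\<close>
  and \<open>T\<^sup>m w\<close> near \<open>y\<close>, and by the cocycle identity \<open>f(n+m,w) = f(n,T\<^sup>m w) f(m,w)\<close> and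
  continuity of \<open>f(n,\<cdot>)\<close> the return value \<open>f(n+m,w)\<close> is close to \<open>f(n,y) h\<close>.

  For the second claim, approximate \<open>g \<in> E\<^sub>y(f)\<close> by return values \<open>f(n,x)\<close> and \<open>h \<in> H\<^sub>y\<close> by
  elements \<open>h' \<in> H\<^sub>x \<subseteq> E\<^sub>x(f)\<close>, which exist by continuity of the selection.

  For the first claim, a point \<open>u\<close> of the closure of \<open>U\<close> either lies in \<open>U H\<^sub>z\<close>, and then a
  neighbourhood of \<open>u\<close> stays in \<open>U H\<^sub>y\<close> for all \<open>y\<close> near \<open>z\<close>; or it is not essential at \<open>z\<close>, and
  then by the approximation principle a neighbourhood of \<open>u\<close> misses \<open>f(n,y) H\<^sub>y\<close> whenever \<open>y\<close>
  and \<open>T\<^sup>n y\<close> are near \<open>z\<close>. Compactness of the closure makes the radius uniform in \<open>u\<close>, and as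
  \<open>H\<^sub>y\<close> is a group, \<open>f(n,y) H\<^sub>y\<close> meets the closure of \<open>U\<close> times \<open>H\<^sub>y\<close> only if it contains a
  point of the closure of \<open>U\<close>.

  Only the facts that \<open>T\<close> is an isometric bijection, that \<open>f\<close> is continuous and that
  \<open>y \<mapsto> H\<^sub>y\<close> is continuous with \<open>H\<^sub>y \<subseteq> E\<^sub>y(f)\<close> are used.
\<close>

lemma Tpow_0 [simp]: "Tpow T 0 x = x"
  by (simp add: Tpow_def)

lemma Tpow_nonpos: "n \<le> 0 \<Longrightarrow> Tpow T n = the_inv T ^^ nat (- n)"
  by (cases "n = 0") (simp_all add: Tpow_def)

lemma Tpow_plus_1:
  assumes "bij T"
  shows "Tpow T (n + 1) x = T (Tpow T n x)"
proof (cases "0 \<le> n")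
  case True
  then have "nat (n + 1) = Suc (nat n)" by simp
  with True show ?thesis by (simp add: Tpow_def)
next
  case False
  then have "nat (- n) = Suc (nat (- (n + 1)))" by simp
  moreover have "T (the_inv T w) = w" for w
    using assms by (simp add: bij_def f_the_inv_into_f)
  ultimately show ?thesis
    using False by (simp add: Tpow_nonpos)
qed

lemma Tpow_minus_1:
  assumes "bij T"
  shows "Tpow T (n - 1) x = the_inv T (Tpow T n x)"
  using Tpow_plus_1[OF assms, of "n - 1"] assms by (simp add: bij_def the_inv_f_f)

lemma Tpow_add:
  assumes "bij T"
  shows "Tpow T (m + n) x = Tpow T m (Tpow T n x)"
proof (induction m rule: int_induct[where k = 0])
  case (step1 i)
  then show ?case
    using Tpow_plus_1[OF assms, of "i + n"] Tpow_plus_1[OF assms, of i] by (simp add: algebra_simps)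
next
  case (step2 i)
  then show ?case
    using Tpow_minus_1[OF assms, of "i + n"] Tpow_minus_1[OF assms, of i] by (simp add: algebra_simps)
qed simp

lemma dist_Tpow:
  fixes T :: "'x::metric_space \<Rightarrow> 'x"
  assumes "bij T" and dist_T: "\<And>x y. dist (T x) (T y) = dist x y"
  shows "dist (Tpow T n x) (Tpow T n y) = dist x y"
proof -
  have dist_inv: "dist (the_inv T x) (the_inv T y) = dist x y" for x y
    using dist_T[of "the_inv T x" "the_inv T y"] assms(1) by (simp add: bij_def f_the_inv_into_f)
  have "dist ((F ^^ k) x) ((F ^^ k) y) = dist x y"
    if "\<And>x y. dist (F x) (F y) = dist x y" for F :: "'x \<Rightarrow> 'x" and k x y
    by (induction k) (simp_all add: that)
  then show ?thesis
    using dist_T dist_inv by (simp add: Tpow_def)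
qed

lemma continuous_on_Tpow:
  fixes T :: "'x::metric_space \<Rightarrow> 'x"
  assumes "bij T" and "\<And>x y. dist (T x) (T y) = dist x y"
  shows "continuous_on UNIV (Tpow T n)"
  unfolding continuous_on_iff using dist_Tpow[OF assms] by metis

lemma eventually_ball_compact:
  assumes "compact K"
    and "\<And>u. u \<in> K \<Longrightarrow> \<exists>Q. open Q \<and> u \<in> Q \<and> eventually (\<lambda>e. \<forall>v\<in>Q. P e v) F"
  shows "eventually (\<lambda>e. \<forall>v\<in>K. P e v) F"
proof -
  have "\<forall>u\<in>K. \<exists>Q. open Q \<and> u \<in> Q \<and> eventually (\<lambda>e. \<forall>v\<in>Q. P e v) F"
    using assms(2) by blast
  then obtain Q where Q: "\<forall>u\<in>K. open (Q u) \<and> u \<in> Q u \<and> eventually (\<lambda>e. \<forall>v\<in>Q u. P e v) F"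
    by (rule bchoice[THEN exE])
  obtain C where C: "C \<subseteq> K" "finite C" "K \<subseteq> (\<Union>u\<in>C. Q u)"
    by (rule compactE_image[OF assms(1), of K Q]) (use Q in auto)
  then have "eventually (\<lambda>e. \<forall>u\<in>C. \<forall>v\<in>Q u. P e v) F"
    using Q by (intro eventually_ball_finite) auto
  then show ?thesis
    by (rule eventually_mono) (use C(3) in blast)
qed

lemma ess_rangeD:
  assumes "g \<in> ess_range G T f x" "open Q" "g \<in> Q" "open W" "x \<in> W"
  shows "\<exists>n. n \<noteq> 0 \<and> (\<exists>y\<in>W. Tpow T n y \<in> W \<and> cocycle G T f n y \<in> Q)"
  using assms unfolding ess_range_def by blast

locale univ_group = group G for G :: "'g monoid" (structure) +
  assumes carrier_UNIV [simp]: "carrier G = UNIV"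
begin

lemma bij_left_translation: "bij (\<lambda>x. a \<otimes> x)"
proof (rule bijI)
  show "inj (\<lambda>x. a \<otimes> x)" by (rule injI) simp
  show "surj (\<lambda>x. a \<otimes> x)"
    by (rule surjI[of _ "\<lambda>x. inv a \<otimes> x"]) (simp add: m_assoc[symmetric])
qed

lemma cocycle_nat_Suc_right:
  "cocycle_nat G T f (Suc k) y = cocycle_nat G T f k (T y) \<otimes> f y"
proof (induction k)
  case (Suc k)
  have "(T ^^ Suc k) y = (T ^^ k) (T y)"
    by (simp add: funpow_Suc_right del: funpow.simps)
  then show ?case
    by (subst cocycle_nat.simps, subst Suc) (simp add: m_assoc)
qed simp

lemma cocycle_0 [simp]: "cocycle G T f 0 x = \<one>"
  by (simp add: cocycle_def)

lemma cocycle_plus_1: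
  assumes "bij T"
  shows "cocycle G T f (n + 1) x = f (Tpow T n x) \<otimes> cocycle G T f n x"
proof (cases "0 \<le> n")
  case True
  then have "nat (n + 1) = Suc (nat n)" by simp
  with True show ?thesis by (simp add: Tpow_def cocycle_def)
next
  case False
  define j where "j = nat (- (n + 1))"
  define y where "y = Tpow T n x"
  have Ty: "T y = Tpow T (n + 1) x"
    using Tpow_plus_1[OF assms] by (simp add: y_def)
  have "nat (- n) = Suc j" using False by (simp add: j_def)
  then have "cocycle G T f n x = inv (cocycle_nat G T f (Suc j) y)"
    using False by (simp add: cocycle_def y_def del: cocycle_nat.simps)
  then have n: "cocycle G T f n x = inv (f y) \<otimes> inv (cocycle_nat G T f j (T y))"
    unfolding cocycle_nat_Suc_right by (simp add: inv_mult_group del: cocycle_nat.simps)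
  have "cocycle G T f (n + 1) x = inv (cocycle_nat G T f j (T y))"
    using False Ty by (cases "n + 1 = 0") (simp_all add: cocycle_def j_def)
  with n show ?thesis
    by (simp add: y_def m_assoc[symmetric])
qed

lemma cocycle_add:
  assumes "bij T"
  shows "cocycle G T f (m + n) x = cocycle G T f m (Tpow T n x) \<otimes> cocycle G T f n x"
proof (induction m rule: int_induct[where k = 0])
  case (step1 i)
  have "cocycle G T f (i + 1 + n) x = f (Tpow T (i + n) x) \<otimes> cocycle G T f (i + n) x"
    using cocycle_plus_1[OF assms, of f "i + n"] by (simp add: algebra_simps)
  also have "\<dots> = cocycle G T f (i + 1) (Tpow T n x) \<otimes> cocycle G T f n x"
    using step1 cocycle_plus_1[OF assms, of f i "Tpow T n x"] Tpow_add[OF assms]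
    by (simp add: m_assoc)
  finally show ?case .
next
  case (step2 i)
  have "cocycle G T f (i + n) x = f (Tpow T (i - 1 + n) x) \<otimes> cocycle G T f (i - 1 + n) x"
    using cocycle_plus_1[OF assms, of f "i - 1 + n" x] by simp
  then have "cocycle G T f (i - 1 + n) x = inv f (Tpow T (i - 1 + n) x) \<otimes> cocycle G T f (i + n) x"
    by (simp add: inv_solve_left)
  also have "\<dots> = cocycle G T f (i - 1) (Tpow T n x) \<otimes> cocycle G T f n x"
    using step2 cocycle_plus_1[OF assms, of f "i - 1" "Tpow T n x"] Tpow_add[OF assms, of "i - 1" n x]
    by (simp add: m_assoc[symmetric] inv_solve_left)
  finally show ?case .
qed simp

lemma mem_set_mult: "x \<in> A <#> K \<longleftrightarrow> (\<exists>a\<in>A. \<exists>k\<in>K. x = a \<otimes> k)"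
  unfolding set_mult_def by blast

lemma mem_l_coset: "x \<in> c <#\<^bsub>G\<^esub> K \<longleftrightarrow> (\<exists>k\<in>K. x = c \<otimes> k)"
  unfolding l_coset_def by blast

lemma inv_mult_cancel_left [simp]: "inv a \<otimes> (a \<otimes> b) = b"
  by (simp add: m_assoc[symmetric])

lemma mem_conj_sub: "x \<in> conj_sub G g K \<longleftrightarrow> (\<exists>k\<in>K. x = g \<otimes> k \<otimes> inv g)"
  unfolding conj_sub_def l_coset_def r_coset_def by auto

lemma subgroup_conj_sub:
  assumes "subgroup K G"
  shows "subgroup (conj_sub G g K) G"
proof (rule subgroupI)
  show "conj_sub G g K \<noteq> {}"
    using subgroup.one_closed[OF assms] mem_conj_sub[of "g \<otimes> \<one> \<otimes> inv g" g K] by blast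
  show "inv x \<in> conj_sub G g K" if x: "x \<in> conj_sub G g K" for x
  proof -
    obtain k where k: "k \<in> K" "x = g \<otimes> k \<otimes> inv g"
      using x by (auto simp: mem_conj_sub)
    then have "inv x = g \<otimes> inv k \<otimes> inv g"
      by (simp add: inv_mult_group m_assoc)
    then show ?thesis
      using k(1) subgroup.m_inv_closed[OF assms] by (auto simp: mem_conj_sub)
  qed
  show "x \<otimes> y \<in> conj_sub G g K" if xy: "x \<in> conj_sub G g K" "y \<in> conj_sub G g K" for x y
  proof -
    obtain k l where kl: "k \<in> K" "l \<in> K" "x = g \<otimes> k \<otimes> inv g" "y = g \<otimes> l \<otimes> inv g"
      using xy by (auto simp: mem_conj_sub)
    then have "x \<otimes> y = g \<otimes> (k \<otimes> l) \<otimes> inv g"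
      by (simp add: m_assoc)
    then show ?thesis
      using kl(1,2) subgroup.m_closed[OF assms] by (auto simp: mem_conj_sub)
  qed
qed simp

lemma l_coset_meets_set_mult:
  assumes "subgroup K G" and "(c <#\<^bsub>G\<^esub> K) \<inter> (V <#> K) \<noteq> {}"
  shows "\<exists>v\<in>V. v \<in> c <#\<^bsub>G\<^esub> K"
proof -
  obtain k v l where "k \<in> K" "v \<in> V" "l \<in> K" "c \<otimes> k = v \<otimes> l"
    using assms(2) unfolding l_coset_def set_mult_def by auto
  then have "v = c \<otimes> k \<otimes> inv l"
    by (simp add: inv_solve_right)
  moreover have "k \<otimes> inv l \<in> K"
    using assms(1) \<open>k \<in> K\<close> \<open>l \<in> K\<close> by (simp add: subgroup.m_closed subgroup.m_inv_closed)
  ultimately show ?thesis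
    using \<open>v \<in> V\<close> unfolding mem_l_coset by (auto simp: m_assoc)
qed

end

locale top_group =
  fixes G :: "('g::topological_space) monoid" (structure)
  assumes topological_group: "topological_group G"

sublocale top_group \<subseteq> univ_group
  using topological_group by (simp add: topological_group_def univ_group_def univ_group_axioms_def)

context top_group
begin

lemma continuous_on_group_mult [continuous_intros]:
  assumes "continuous_on A F" and "continuous_on A K"
  shows "continuous_on A (\<lambda>x. F x \<otimes> K x)"
proof -
  have "continuous_on UNIV (\<lambda>p. fst p \<otimes> snd p)"
    using topological_group by (simp add: topological_group_def)
  from continuous_on_compose2[OF this continuous_on_Pair[OF assms]] show ?thesis
    by simp
qed

lemma continuous_on_group_inv [continuous_intros]:
  assumes "continuous_on A F"
  shows "continuous_on A (\<lambda>x. inv F x)"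
proof -
  have "continuous_on UNIV (\<lambda>x. inv x)"
    using topological_group by (simp add: topological_group_def)
  from continuous_on_compose2[OF this assms] show ?thesis
    by simp
qed

lemma mult_nbhds:
  assumes "open Q" and "a \<otimes> b \<in> Q"
  obtains A B where "open A" "open B" "a \<in> A" "b \<in> B" "\<And>x y. x \<in> A \<Longrightarrow> y \<in> B \<Longrightarrow> x \<otimes> y \<in> Q"
proof -
  have "open ((\<lambda>p. fst p \<otimes> snd p) -` Q)"
    by (intro open_vimage assms(1) continuous_intros)
  moreover have "(a, b) \<in> (\<lambda>p. fst p \<otimes> snd p) -` Q"
    using assms(2) by simp
  ultimately obtain A B where "open A" "open B" "(a, b) \<in> A \<times> B" "A \<times> B \<subseteq> (\<lambda>p. fst p \<otimes> snd p) -` Q"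
    by (rule open_prod_elim)
  then show ?thesis
    using that by fastforce
qed

lemma div_nbhds:
  assumes "open Q" and "a \<otimes> inv b \<in> Q"
  obtains A B where "open A" "open B" "a \<in> A" "b \<in> B" "\<And>x y. x \<in> A \<Longrightarrow> y \<in> B \<Longrightarrow> x \<otimes> inv y \<in> Q"
proof -
  obtain A B where AB: "open A" "open B" "a \<in> A" "inv b \<in> B" "\<And>x y. x \<in> A \<Longrightarrow> y \<in> B \<Longrightarrow> x \<otimes> y \<in> Q"
    using mult_nbhds[OF assms] by blast
  have "open ((\<lambda>y. inv y) -` B)"
    by (intro open_vimage AB(2) continuous_intros)
  then show ?thesis
    using that[of A "(\<lambda>y. inv y) -` B"] AB by simp
qed

lemma open_conjugation_vimage: "open B \<Longrightarrow> open {g. g \<otimes> k \<otimes> inv g \<in> B}"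
  using open_vimage[of B "\<lambda>g. g \<otimes> k \<otimes> inv g"] by (simp add: vimage_def continuous_intros)

lemma continuous_into_conjugates_subgroup:
  assumes "continuous_into_conjugates G K S" and "subgroup K G"
  shows "subgroup (S y) G"
proof -
  obtain g where "S y = conj_sub G g K"
    using assms(1) unfolding continuous_into_conjugates_def conjugates_def by blast
  then show ?thesis
    using subgroup_conj_sub[OF assms(2)] by simp
qed

lemma continuous_into_conjugates_eventually_meets:
  assumes "continuous_into_conjugates G K S" and "open B" and "S y \<inter> B \<noteq> {}"
  shows "eventually (\<lambda>x. S x \<inter> B \<noteq> {}) (nhds y)"
proof -
  have "{g. conj_sub G g K \<in> {L. L \<inter> B \<noteq> {}}} = (\<Union>k\<in>K. {g. g \<otimes> k \<otimes> inv g \<in> B})"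
    by (auto simp: mem_conj_sub disjoint_iff)
  then have "open {g. conj_sub G g K \<in> {L. L \<inter> B \<noteq> {}}}"
    using open_conjugation_vimage[OF assms(2)] by auto
  then have "open {x. S x \<in> {L. L \<inter> B \<noteq> {}}}"
    using assms(1) unfolding continuous_into_conjugates_def by blast
  then show ?thesis
    using assms(3) by (auto simp: eventually_nhds)
qed

end

locale isometric_cocycle = top_group G
  for G :: "('g::t1_space) monoid" (structure) +
  fixes T :: "'x::metric_space \<Rightarrow> 'x" and f :: "'x \<Rightarrow> 'g"
  assumes bij_T: "bij T"
    and dist_T: "\<And>x y. dist (T x) (T y) = dist x y"
    and continuous_f: "continuous_on UNIV f"
begin

lemma continuous_on_cocycle: "continuous_on UNIV (cocycle G T f n)"
proof (induction n rule: int_induct[where k = 0])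
  case base
  then show ?case by simp
next
  case (step1 i)
  have "continuous_on UNIV (\<lambda>x. f (Tpow T i x))"
    using continuous_on_compose2[OF continuous_f continuous_on_Tpow[OF bij_T dist_T]] by simp
  with step1 show ?case
    using continuous_on_group_mult cocycle_plus_1[OF bij_T] by simp
next
  case (step2 i)
  have "continuous_on UNIV (\<lambda>x. f (Tpow T (i - 1) x))"
    using continuous_on_compose2[OF continuous_f continuous_on_Tpow[OF bij_T dist_T]] by simp
  moreover have "cocycle G T f (i - 1) = (\<lambda>x. inv f (Tpow T (i - 1) x) \<otimes> cocycle G T f i x)"
    using cocycle_plus_1[OF bij_T, of f "i - 1"] by (simp add: inv_solve_left fun_eq_iff)
  ultimately show ?case
    using step2(2) by (simp add: continuous_on_group_mult continuous_on_group_inv)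
qed

lemma ess_range_shift:
  assumes "h \<in> ess_range G T f y" and "open Q" and "cocycle G T f n y \<otimes> h \<in> Q" and "\<epsilon> > 0"
  obtains N x where "dist x y < \<epsilon>" "dist (Tpow T N x) (Tpow T n y) < \<epsilon>" "cocycle G T f N x \<in> Q"
proof -
  obtain A B where AB: "open A" "open B" "cocycle G T f n y \<in> A" "h \<in> B"
      "\<And>a b. a \<in> A \<Longrightarrow> b \<in> B \<Longrightarrow> a \<otimes> b \<in> Q"
    using mult_nbhds[OF assms(2,3)] by blast
  have "open (cocycle G T f n -` A)"
    by (rule open_vimage[OF AB(1) continuous_on_cocycle])
  then obtain d where "d > 0" and d: "ball y d \<subseteq> cocycle G T f n -` A"
    using AB(3) by (auto elim: openE)
  define r where "r = min d \<epsilon>"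
  have "r > 0" using \<open>d > 0\<close> assms(4) by (simp add: r_def)
  then obtain m w where w: "w \<in> ball y r" "Tpow T m w \<in> ball y r" "cocycle G T f m w \<in> B"
    using ess_rangeD[OF assms(1) AB(2,4) open_ball[of y r]] by auto
  have "cocycle G T f (n + m) w = cocycle G T f n (Tpow T m w) \<otimes> cocycle G T f m w"
    by (rule cocycle_add[OF bij_T])
  moreover have "cocycle G T f n (Tpow T m w) \<in> A"
    using w(2) d by (auto simp: r_def)
  ultimately have "cocycle G T f (n + m) w \<in> Q"
    using AB(5) w(3) by simp
  moreover have "dist (Tpow T (n + m) w) (Tpow T n y) = dist (Tpow T m w) y"
    using Tpow_add[OF bij_T] dist_Tpow[OF bij_T dist_T] by simp
  ultimately show ?thesis
    using that[of w "n + m"] w(1,2) by (simp add: r_def dist_commute)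
qed

lemma ess_rangeI_approx:
  assumes "u \<noteq> \<one>"
    and approx: "\<And>Q W. open Q \<Longrightarrow> u \<in> Q \<Longrightarrow> open W \<Longrightarrow> z \<in> W \<Longrightarrow>
      \<exists>n y h. y \<in> W \<and> Tpow T n y \<in> W \<and> h \<in> ess_range G T f y \<and> cocycle G T f n y \<otimes> h \<in> Q"
  shows "u \<in> ess_range G T f z"
  unfolding ess_range_def
proof (intro CollectI allI impI)
  fix Q W assume Q: "open Q" "u \<in> Q" and W: "open W" "z \<in> W"
  \<comment> \<open>Removing \<open>\<one>\<close> from \<open>Q\<close> rules out the trivial return of length 0.\<close>
  have "open (Q - {\<one>})" "u \<in> Q - {\<one>}"
    using Q assms(1) by auto
  then obtain n y h where y: "y \<in> W" "Tpow T n y \<in> W" "h \<in> ess_range G T f y"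
      "cocycle G T f n y \<otimes> h \<in> Q - {\<one>}"
    using approx W by blast
  obtain e1 where "e1 > 0" "ball y e1 \<subseteq> W"
    using W(1) y(1) by (auto elim: openE)
  moreover obtain e2 where "e2 > 0" "ball (Tpow T n y) e2 \<subseteq> W"
    using W(1) y(2) by (auto elim: openE)
  moreover obtain N x where "dist x y < min e1 e2" "dist (Tpow T N x) (Tpow T n y) < min e1 e2"
      "cocycle G T f N x \<in> Q - {\<one>}"
    using ess_range_shift[OF y(3) \<open>open (Q - {\<one>})\<close> y(4)] \<open>e1 > 0\<close> \<open>e2 > 0\<close> by (metis min_less_iff_conj)
  ultimately show "\<exists>n. n \<noteq> 0 \<and> (\<exists>y. y \<in> W \<and> Tpow T n y \<in> W \<and> cocycle G T f n y \<in> Q)"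
    by (intro exI[of _ N] conjI exI[of _ x]) (auto simp: dist_commute)
qed

end

locale cocycle_selection = isometric_cocycle G T f
  for G :: "('g::t1_space) monoid" (structure) and T :: "'x::metric_space \<Rightarrow> 'x" and f +
  fixes H :: "'g set" and S :: "'x \<Rightarrow> 'g set"
  assumes subgroup_H: "subgroup H G"
    and consistent_selection: "consistent_selection G T f H S"
begin

lemma subgroup_selection: "subgroup (S y) G"
  using consistent_selection subgroup_H continuous_into_conjugates_subgroup
  by (auto simp: consistent_selection_def)

lemma selection_subset_ess_range: "S y \<subseteq> ess_range G T f y"
  using consistent_selection by (simp add: consistent_selection_def)

lemma selection_eventually_meets: "open B \<Longrightarrow> S y \<inter> B \<noteq> {} \<Longrightarrow> eventually (\<lambda>x. S x \<inter> B \<noteq> {}) (nhds y)"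
  using consistent_selection unfolding consistent_selection_def
  by (blast intro: continuous_into_conjugates_eventually_meets)

lemma ess_range_mult_selection:
  assumes g: "g \<in> ess_range G T f y" and h: "h \<in> S y"
  shows "g \<otimes> h \<in> ess_range G T f y"
proof (cases "g \<otimes> h = \<one>")
  case True
  then show ?thesis
    using subgroup.one_closed[OF subgroup_selection] selection_subset_ess_range by auto
next
  case False
  then show ?thesis
  proof (rule ess_rangeI_approx)
    fix Q W assume "open Q" "g \<otimes> h \<in> Q" "open W" "y \<in> W"
    obtain A B where AB: "open A" "open B" "g \<in> A" "h \<in> B"
        "\<And>a b. a \<in> A \<Longrightarrow> b \<in> B \<Longrightarrow> a \<otimes> b \<in> Q"
      using mult_nbhds[OF \<open>open Q\<close> \<open>g \<otimes> h \<in> Q\<close>] by blast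
    have "eventually (\<lambda>x. x \<in> W) (nhds y)"
      using \<open>open W\<close> \<open>y \<in> W\<close> by (rule eventually_nhds_in_open)
    moreover have "eventually (\<lambda>x. S x \<inter> B \<noteq> {}) (nhds y)"
      using selection_eventually_meets[OF AB(2)] h AB(4) by blast
    ultimately have "eventually (\<lambda>x. x \<in> W \<and> S x \<inter> B \<noteq> {}) (nhds y)"
      by (rule eventually_conj)
    then obtain V where V: "open V" "y \<in> V" "\<And>x. x \<in> V \<Longrightarrow> x \<in> W \<and> S x \<inter> B \<noteq> {}"
      unfolding eventually_nhds by blast
    then obtain n x where x: "x \<in> V" "Tpow T n x \<in> V" "cocycle G T f n x \<in> A"
      using ess_rangeD[OF g AB(1,3)] by blast
    moreover obtain h' where "h' \<in> S x" "h' \<in> B"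
      using V(3)[OF x(1)] by blast
    ultimately show "\<exists>n x h. x \<in> W \<and> Tpow T n x \<in> W \<and> h \<in> ess_range G T f x \<and> cocycle G T f n x \<otimes> h \<in> Q"
      using V(3) AB(5) selection_subset_ess_range by blast
  qed
qed

lemma set_mult_selection_nhd:
  assumes "open U" and "u \<in> U <#> S z"
  obtains A where "open A" "u \<in> A" "eventually (\<lambda>y. A \<subseteq> U <#> S y) (nhds z)"
proof -
  obtain v k where "v \<in> U" "k \<in> S z" "u = v \<otimes> k"
    using assms(2) unfolding mem_set_mult by blast
  then have "u \<otimes> inv k \<in> U"
    by (simp add: m_assoc)
  from div_nbhds[OF assms(1) this] obtain A B where AB: "open A" "open B" "u \<in> A" "k \<in> B"
      "\<And>a b. a \<in> A \<Longrightarrow> b \<in> B \<Longrightarrow> a \<otimes> inv b \<in> U"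
    by blast
  have sub: "A \<subseteq> U <#> S y" if meets: "S y \<inter> B \<noteq> {}" for y
  proof
    fix a assume "a \<in> A"
    obtain b where b: "b \<in> S y" "b \<in> B"
      using meets by blast
    have "a = (a \<otimes> inv b) \<otimes> b"
      by (simp add: m_assoc)
    then show "a \<in> U <#> S y"
      using AB(5)[OF \<open>a \<in> A\<close> b(2)] b(1) unfolding mem_set_mult by blast
  qed
  have "eventually (\<lambda>y. S y \<inter> B \<noteq> {}) (nhds z)"
    using selection_eventually_meets[OF AB(2)] \<open>k \<in> S z\<close> AB(4) by blast
  then have "eventually (\<lambda>y. A \<subseteq> U <#> S y) (nhds z)"
    by (rule eventually_mono) (rule sub)
  then show ?thesis
    using that AB(1,3) by blast
qed

lemma not_ess_range_avoids_near_returns: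
  assumes "u \<notin> ess_range G T f z" and "u \<noteq> \<one>"
  obtains Q e where "open Q" "u \<in> Q" "e > 0"
    "\<And>y n. dist y z < e \<Longrightarrow> dist (Tpow T n y) z < e \<Longrightarrow> Q \<inter> (cocycle G T f n y <#\<^bsub>G\<^esub> S y) = {}"
proof -
  have "\<exists>Q W. open Q \<and> u \<in> Q \<and> open W \<and> z \<in> W \<and>
      \<not> (\<exists>n y h. y \<in> W \<and> Tpow T n y \<in> W \<and> h \<in> ess_range G T f y \<and> cocycle G T f n y \<otimes> h \<in> Q)"
  proof (rule ccontr)
    assume "\<not> ?thesis"
    then have "u \<in> ess_range G T f z"
      by (intro ess_rangeI_approx[OF assms(2)]) blast
    with assms(1) show False ..
  qed
  then obtain Q W where QW: "open Q" "u \<in> Q" "open W" "z \<in> W" and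
    no_return: "\<And>n y h. y \<in> W \<Longrightarrow> Tpow T n y \<in> W \<Longrightarrow> h \<in> ess_range G T f y \<Longrightarrow> cocycle G T f n y \<otimes> h \<notin> Q"
    by blast
  obtain e where "e > 0" "ball z e \<subseteq> W"
    using QW(3,4) by (auto elim: openE)
  have "Q \<inter> (cocycle G T f n y <#\<^bsub>G\<^esub> S y) = {}" if "dist y z < e" "dist (Tpow T n y) z < e" for y n
  proof -
    have "y \<in> W" "Tpow T n y \<in> W"
      using that \<open>ball z e \<subseteq> W\<close> by (auto simp: dist_commute)
    then show ?thesis
      using no_return selection_subset_ess_range unfolding l_coset_def by blast
  qed
  then show ?thesis
    using that QW(1,2) \<open>e > 0\<close> by blast
qed

lemma near_return_coset_local:
  assumes "open U" and "\<one> \<in> U"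
    and U_z: "ess_range G T f z \<inter> ((closure U <#> S z) - (U <#> S z)) = {}"
    and "u \<in> closure U"
  shows "\<exists>Q. open Q \<and> u \<in> Q \<and>
    eventually (\<lambda>e. \<forall>v\<in>Q. \<forall>y n. dist y z < e \<longrightarrow> dist (Tpow T n y) z < e \<longrightarrow>
        v \<in> cocycle G T f n y <#\<^bsub>G\<^esub> S y \<longrightarrow> v \<in> U <#> S y) (at_right 0)"
proof (cases "u \<in> U <#> S z")
  case True
  then obtain A where A: "open A" "u \<in> A" "eventually (\<lambda>y. A \<subseteq> U <#> S y) (nhds z)"
    using set_mult_selection_nhd[OF assms(1)] by blast
  then obtain d where "d > 0" and d: "\<And>y. dist y z < d \<Longrightarrow> A \<subseteq> U <#> S y"
    unfolding eventually_nhds_metric by blast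
  then have "A \<subseteq> U <#> S y" if "dist y z < e" "e < d" for y e
    using that by (meson d less_trans)
  then have "eventually (\<lambda>e. \<forall>v\<in>A. \<forall>y n. dist y z < e \<longrightarrow> dist (Tpow T n y) z < e \<longrightarrow>
      v \<in> cocycle G T f n y <#\<^bsub>G\<^esub> S y \<longrightarrow> v \<in> U <#> S y) (at_right 0)"
    unfolding eventually_at_right_field using \<open>d > 0\<close> by (intro exI[of _ d]) blast
  with A(1,2) show ?thesis
    by blast
next
  case False
  have "\<one> \<in> S z"
    using subgroup.one_closed[OF subgroup_selection] .
  then have "u \<in> closure U <#> S z" "\<one> \<in> U <#> S z"
    using assms(2,4) unfolding mem_set_mult by (metis carrier_UNIV UNIV_I r_one)+
  then have "u \<notin> ess_range G T f z" "u \<noteq> \<one>"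
    using U_z False by auto
  then obtain Q e where Q: "open Q" "u \<in> Q" "e > 0"
    "\<And>y n. dist y z < e \<Longrightarrow> dist (Tpow T n y) z < e \<Longrightarrow> Q \<inter> (cocycle G T f n y <#\<^bsub>G\<^esub> S y) = {}"
    by (rule not_ess_range_avoids_near_returns) blast
  then have "Q \<inter> (cocycle G T f n y <#\<^bsub>G\<^esub> S y) = {}"
    if "dist y z < e'" "dist (Tpow T n y) z < e'" "e' < e" for y n e'
    using that by (meson Q(4) less_trans)
  then have "eventually (\<lambda>e. \<forall>v\<in>Q. \<forall>y n. dist y z < e \<longrightarrow> dist (Tpow T n y) z < e \<longrightarrow>
      v \<in> cocycle G T f n y <#\<^bsub>G\<^esub> S y \<longrightarrow> v \<in> U <#> S y) (at_right 0)"
    unfolding eventually_at_right_field using \<open>e > 0\<close> by (intro exI[of _ e]) blast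
  with Q(1,2) show ?thesis
    by blast
qed

lemma near_return_coset_dichotomy:
  assumes "open U" and "\<one> \<in> U" and "compact (closure U)"
    and "ess_range G T f z \<inter> ((closure U <#> S z) - (U <#> S z)) = {}"
  shows "\<exists>\<epsilon>>0. \<forall>y n. dist y z < \<epsilon> \<and> dist (Tpow T n y) z < \<epsilon> \<longrightarrow>
      (cocycle G T f n y <#\<^bsub>G\<^esub> S y) \<inter> (U <#> S y) \<noteq> {}
      \<or> (cocycle G T f n y <#\<^bsub>G\<^esub> S y) \<inter> (closure U <#> S y) = {}"
proof -
  have "eventually (\<lambda>e. \<forall>v\<in>closure U. \<forall>y n. dist y z < e \<longrightarrow> dist (Tpow T n y) z < e \<longrightarrow>
      v \<in> cocycle G T f n y <#\<^bsub>G\<^esub> S y \<longrightarrow> v \<in> U <#> S y) (at_right 0)"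
    using assms(3) near_return_coset_local[OF assms(1,2,4)] by (rule eventually_ball_compact)
  with eventually_at_right_less have "eventually (\<lambda>e. 0 < e \<and> (\<forall>v\<in>closure U. \<forall>y n.
      dist y z < e \<longrightarrow> dist (Tpow T n y) z < e \<longrightarrow> v \<in> cocycle G T f n y <#\<^bsub>G\<^esub> S y \<longrightarrow> v \<in> U <#> S y))
      (at_right 0)"
    by (rule eventually_conj)
  then obtain \<epsilon> where "\<epsilon> > 0" and \<epsilon>: "\<forall>v\<in>closure U. \<forall>y n.
      dist y z < \<epsilon> \<longrightarrow> dist (Tpow T n y) z < \<epsilon> \<longrightarrow> v \<in> cocycle G T f n y <#\<^bsub>G\<^esub> S y \<longrightarrow> v \<in> U <#> S y"
    using eventually_happens'[OF trivial_limit_at_right_real] by blast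
  show ?thesis
  proof (intro exI[of _ \<epsilon>] conjI allI impI)
    fix y n assume near: "dist y z < \<epsilon> \<and> dist (Tpow T n y) z < \<epsilon>"
    show "(cocycle G T f n y <#\<^bsub>G\<^esub> S y) \<inter> (U <#> S y) \<noteq> {}
      \<or> (cocycle G T f n y <#\<^bsub>G\<^esub> S y) \<inter> (closure U <#> S y) = {}"
    proof (rule disjCI)
      assume "(cocycle G T f n y <#\<^bsub>G\<^esub> S y) \<inter> (closure U <#> S y) \<noteq> {}"
      then obtain v where v: "v \<in> closure U" "v \<in> cocycle G T f n y <#\<^bsub>G\<^esub> S y"
        using l_coset_meets_set_mult[OF subgroup_selection] by blast
      then have "v \<in> U <#> S y"
        using \<epsilon> near by blast
      with v(2) show "(cocycle G T f n y <#\<^bsub>G\<^esub> S y) \<inter> (U <#> S y) \<noteq> {}"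
        by blast
    qed
  qed (rule \<open>\<epsilon> > 0\<close>)
qed

end

theorem lemma4p1:
  fixes X :: "('x::metric_space) monoid"
    and T :: "'x \<Rightarrow> 'x"
    and G :: "('g::{t2_space, second_countable_topology}) monoid"
    and f :: "'x \<Rightarrow> 'g"
    and H :: "'g set"
    and S :: "'x \<Rightarrow> 'g set"
    and U :: "'g set"
    and z :: 'x
  assumes X_group: "topological_group X"
    and X_compact: "compact (UNIV :: 'x set)"
    and X_loc_conn: "locally connected (UNIV :: 'x set)"
    and dist_invariant: "\<forall>a x y. dist (a \<otimes>\<^bsub>X\<^esub> x) (a \<otimes>\<^bsub>X\<^esub> y) = dist x y
                               \<and> dist (x \<otimes>\<^bsub>X\<^esub> a) (y \<otimes>\<^bsub>X\<^esub> a) = dist x y"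
    and T_min: "minimal_rotation X T"
    and G_group: "topological_group G"
    and G_loc_compact: "locally compact (UNIV :: 'g set)"
    and f_cont: "continuous_on UNIV f"
    and H_sub: "subgroup H G"
    and H_closed: "closed H"
    and S_sel: "consistent_selection G T f H S"
    and U_open: "open U"
    and U_one: "\<one>\<^bsub>G\<^esub> \<in> U"
    and U_relcpt: "compact (closure U)"
    and U_z: "ess_range G T f z \<inter> ((closure U <#>\<^bsub>G\<^esub> S z) - (U <#>\<^bsub>G\<^esub> S z)) = {}"
  shows "(\<exists>\<epsilon>>0. \<forall>y (n::int). dist y z < \<epsilon> \<and> dist (Tpow T n y) z < \<epsilon> \<longrightarrow>
            ((cocycle G T f n y <#\<^bsub>G\<^esub> S y) \<inter> (U <#>\<^bsub>G\<^esub> S y) \<noteq> {}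
             \<or> (cocycle G T f n y <#\<^bsub>G\<^esub> S y) \<inter> (closure U <#>\<^bsub>G\<^esub> S y) = {}))
      \<and> (\<forall>y. \<forall>g \<in> ess_range G T f y. g <#\<^bsub>G\<^esub> S y \<subseteq> ess_range G T f y)"
proof -
  interpret X: top_group X
    by (rule top_group.intro) (rule X_group)
  obtain a where T_def: "T = (\<lambda>x. a \<otimes>\<^bsub>X\<^esub> x)"
    using T_min by (auto simp: minimal_rotation_def)
  have "bij T" "\<And>x y. dist (T x) (T y) = dist x y"
    using X.bij_left_translation dist_invariant by (simp_all add: T_def)
  then interpret cocycle_selection G T f H S
    using G_group f_cont H_sub S_sel
    by (simp add: cocycle_selection_def cocycle_selection_axioms_def isometric_cocycle_def
        isometric_cocycle_axioms_def top_group_def)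
  show ?thesis
    using near_return_coset_dichotomy[OF U_open U_one U_relcpt U_z] ess_range_mult_selection
    by (auto simp: mem_l_coset)
qed

end
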